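(* Let $X,Y$ be Banach spaces and $N$ a positively octahedral absolute normalized norm on $\mathbb R^2$, and let $a,b\ge0$ be such that $N(a,b)=1$ and $N((a,b)+(0,1))=N((a,b)+(1,0))=2$. If $x\in S_X$ and $y\in S_Y$ are super Daugavet points, then $(ax,by)$ is a super Daugavet point of $X\oplus_NY$.
   Context: A norm $N$ on $\mathbb R^2$ is absolute if $N(a,b)=N(|a|,|b|)$ and normalized if $N(1,0)=N(0,1)=1$; it is positively octahedral if there exist $a,b\ge0$ with $N(a,b)=1$ and $N((a,b)+(0,1))=N((a,b)+(1,0))=2$. $X\oplus_NY$ is $X\times Y$ with norm $\|(x,y)\|=N(\|x\|,\|y\|)$. An element $x\in S_X$ is a super Daugavet point if $\sup_{z\in V}\|x-z\|=2$ for every non-empty relatively weakly open subset $V$ of $B_X$. *)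

theory Defs
  imports "HOL-Analysis.Analysis"
begin

definition is_norm_R2 :: "(real \<times> real \<Rightarrow> real) \<Rightarrow> bool" where
  "is_norm_R2 N \<longleftrightarrow>
     (\<forall>u. 0 \<le> N u) \<and> (\<forall>u. N u = 0 \<longleftrightarrow> u = (0,0)) \<and>
     (\<forall>c s t. N (c * s, c * t) = \<bar>c\<bar> * N (s, t)) \<and>
     (\<forall>s t s' t'. N (s + s', t + t') \<le> N (s, t) + N (s', t'))"

definition absolute_norm :: "(real \<times> real \<Rightarrow> real) \<Rightarrow> bool" where
  "absolute_norm N \<longleftrightarrow> is_norm_R2 N \<and> (\<forall>s t. N (s, t) = N (\<bar>s\<bar>, \<bar>t\<bar>))"

definition normalized_norm :: "(real \<times> real \<Rightarrow> real) \<Rightarrow> bool" where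
  "normalized_norm N \<longleftrightarrow> N (1, 0) = 1 \<and> N (0, 1) = 1"

definition positively_octahedral :: "(real \<times> real \<Rightarrow> real) \<Rightarrow> bool" where
  "positively_octahedral N \<longleftrightarrow>
     (\<exists>a b. 0 \<le> a \<and> 0 \<le> b \<and> N (a, b) = 1 \<and> N (a, b + 1) = 2 \<and> N (a + 1, b) = 2)"

definition oplus_norm :: "(real \<times> real \<Rightarrow> real) \<Rightarrow> ('a::real_normed_vector \<times> 'b::real_normed_vector) \<Rightarrow> real" where
  "oplus_norm N p = N (norm (fst p), norm (snd p))"

definition bounded_functional :: "('v::real_vector \<Rightarrow> real) \<Rightarrow> ('v \<Rightarrow> real) \<Rightarrow> bool" where
  "bounded_functional nrm f \<longleftrightarrow> linear f \<and> (\<exists>C. \<forall>v. \<bar>f v\<bar> \<le> C * nrm v)"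

definition weakly_open :: "('v::real_vector \<Rightarrow> real) \<Rightarrow> 'v set \<Rightarrow> bool" where
  "weakly_open nrm U \<longleftrightarrow>
     (\<forall>u\<in>U. \<exists>F \<epsilon>. finite F \<and> (\<forall>f\<in>F. bounded_functional nrm f) \<and> 0 < \<epsilon> \<and>
        {v. \<forall>f\<in>F. \<bar>f v - f u\<bar> < \<epsilon>} \<subseteq> U)"

definition unit_ball :: "('v \<Rightarrow> real) \<Rightarrow> 'v set" where
  "unit_ball nrm = {v. nrm v \<le> 1}"

definition super_daugavet_point :: "('v::real_vector \<Rightarrow> real) \<Rightarrow> 'v \<Rightarrow> bool" where
  "super_daugavet_point nrm x \<longleftrightarrow> nrm x = 1 \<and>
     (\<forall>U. weakly_open nrm U \<and> U \<inter> unit_ball nrm \<noteq> {} \<longrightarrow>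
          (SUP z\<in>U \<inter> unit_ball nrm. nrm (x - z)) = 2)"

end

theory Submission
  imports Defs
begin

text \<open>Let (u, v) lie in a weak neighbourhood U intersected with the unit ball of the sum, and
  choose (\<alpha>, \<beta>) with N(\<alpha>, \<beta>) = 1 dominating (\<parallel>u\<parallel>, \<parallel>v\<parallel>). Rescaling the super Daugavet
  property of x and y gives z1 weakly close to u and z2 weakly close to v with \<parallel>z1\<parallel> \<le> \<alpha>,
  \<parallel>z2\<parallel> \<le> \<beta>, \<parallel>a x - z1\<parallel> close to a + \<alpha> and \<parallel>b y - z2\<parallel> close to b + \<beta>. So the distance from
  (a x, b y) to (z1, z2) is close to N(a + \<alpha>, b + \<beta>), which equals 2: (\<alpha>, \<beta>) lies in the
  cone spanned by (a, b) and (1, 0) or (0, 1), and N is additive on these cones because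
  N(a, b + 1) = N(a + 1, b) = 2.\<close>

lemma norm_R2_homogeneous: "is_norm_R2 N \<Longrightarrow> N (c * s, c * t) = \<bar>c\<bar> * N (s, t)"
  unfolding is_norm_R2_def by blast

lemma norm_R2_triangle: "is_norm_R2 N \<Longrightarrow> N (s + s', t + t') \<le> N (s, t) + N (s', t')"
  unfolding is_norm_R2_def by blast

lemma norm_R2_nonneg: "is_norm_R2 N \<Longrightarrow> 0 \<le> N p"
  unfolding is_norm_R2_def by blast

lemma norm_R2_eq_0_iff: "is_norm_R2 N \<Longrightarrow> N p = 0 \<longleftrightarrow> p = (0, 0)"
  unfolding is_norm_R2_def by blast

lemma is_norm_R2_swap: "is_norm_R2 N \<Longrightarrow> is_norm_R2 (\<lambda>(s, t). N (t, s))"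
  unfolding is_norm_R2_def by (auto simp: split_beta)

lemma absolute_norm_swap: "absolute_norm N \<Longrightarrow> absolute_norm (\<lambda>(s, t). N (t, s))"
  unfolding absolute_norm_def using is_norm_R2_swap by auto

lemma normalized_norm_swap: "normalized_norm N \<Longrightarrow> normalized_norm (\<lambda>(s, t). N (t, s))"
  unfolding normalized_norm_def by simp

lemma absolute_norm_is_norm_R2: "absolute_norm N \<Longrightarrow> is_norm_R2 N"
  unfolding absolute_norm_def by blast

lemma normalized_norm_axis1: "is_norm_R2 N \<Longrightarrow> normalized_norm N \<Longrightarrow> N (c, 0) = \<bar>c\<bar>"
  using norm_R2_homogeneous[of N c 1 0] unfolding normalized_norm_def by simp

lemma normalized_norm_axis2:
  assumes "is_norm_R2 N" "normalized_norm N"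
  shows "N (0, c) = \<bar>c\<bar>"
  using normalized_norm_axis1[OF is_norm_R2_swap[OF assms(1)] normalized_norm_swap[OF assms(2)]]
  by simp

lemma norm_R2_le_l1: "is_norm_R2 N \<Longrightarrow> normalized_norm N \<Longrightarrow> N (s, t) \<le> \<bar>s\<bar> + \<bar>t\<bar>"
  using norm_R2_triangle[of N s 0 0 t] normalized_norm_axis1 normalized_norm_axis2 by fastforce

lemma norm_R2_ge_diff_l1:
  assumes "is_norm_R2 N" "normalized_norm N"
  shows "N (s', t') - \<bar>s' - s\<bar> - \<bar>t' - t\<bar> \<le> N (s, t)"
  using norm_R2_triangle[OF assms(1), of s "s' - s" t "t' - t"] norm_R2_le_l1[OF assms, of "s' - s" "t' - t"]
  by simp

text \<open>(s, t) is a convex combination of (s', t) and (-s', t), which have the same norm.\<close>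
lemma absolute_norm_mono1:
  assumes A: "absolute_norm N" and "0 \<le> s" "s \<le> s'"
  shows "N (s, t) \<le> N (s', t)"
proof (cases "s' = 0")
  case True
  then show ?thesis using assms by simp
next
  case False
  have N: "is_norm_R2 N" using A by (rule absolute_norm_is_norm_R2)
  define l where "l = (s + s') / (2 * s')"
  have l: "0 \<le> l" "l \<le> 1" using False assms unfolding l_def by (auto simp: field_simps)
  have "s = l * s' + (1 - l) * (- s')" using False unfolding l_def by (simp add: field_simps)
  moreover have "t = l * t + (1 - l) * t" by (simp add: algebra_simps)
  ultimately have "N (s, t) = N (l * s' + (1 - l) * (- s'), l * t + (1 - l) * t)"
    by simp
  also have "\<dots> \<le> N (l * s', l * t) + N ((1 - l) * (- s'), (1 - l) * t)"
    by (rule norm_R2_triangle[OF N])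
  also have "\<dots> = l * N (s', t) + (1 - l) * N (- s', t)"
    using norm_R2_homogeneous[OF N, of l s' t] norm_R2_homogeneous[OF N, of "1 - l" "- s'" t] l
    by simp
  also have "N (- s', t) = N (s', t)"
    using A unfolding absolute_norm_def by (metis abs_minus_cancel)
  finally show ?thesis by (simp add: algebra_simps)
qed

lemma absolute_norm_mono:
  assumes A: "absolute_norm N" and "0 \<le> s" "s \<le> s'" "0 \<le> t" "t \<le> t'"
  shows "N (s, t) \<le> N (s', t')"
proof -
  have "N (s', t) \<le> N (s', t')"
    using absolute_norm_mono1[OF absolute_norm_swap[OF A], of t t' s'] assms by simp
  then show ?thesis using absolute_norm_mono1[OF A, of s s' t] assms by linarith
qed

lemma absolute_norm_coord_le:
  assumes "absolute_norm N" "normalized_norm N" "0 \<le> s" "0 \<le> t"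
  shows "s \<le> N (s, t)" and "t \<le> N (s, t)"
  using absolute_norm_mono[OF assms(1), of s s 0 t] absolute_norm_mono[OF assms(1), of 0 s t t]
    normalized_norm_axis1[OF absolute_norm_is_norm_R2 assms(2)]
    normalized_norm_axis2[OF absolute_norm_is_norm_R2 assms(2)] assms
  by auto

lemma absolute_norm_exists_unit_above:
  assumes A: "absolute_norm N" and nn: "normalized_norm N"
    and "0 \<le> s" "0 \<le> t" "N (s, t) \<le> 1"
  obtains \<alpha> \<beta> where "s \<le> \<alpha>" "t \<le> \<beta>" "N (\<alpha>, \<beta>) = 1"
proof (cases "N (s, t) = 0")
  case True
  then have "s = 0" "t = 0" using norm_R2_eq_0_iff[OF absolute_norm_is_norm_R2[OF A]] by auto
  then show ?thesis using that[of 1 0] nn unfolding normalized_norm_def by simp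
next
  case False
  define n where "n = N (s, t)"
  have n: "0 < n" "n \<le> 1"
    using False assms norm_R2_nonneg[OF absolute_norm_is_norm_R2[OF A]] unfolding n_def
    by (auto simp: order_less_le)
  have "N (s / n, t / n) = 1"
    using norm_R2_homogeneous[OF absolute_norm_is_norm_R2[OF A], of "1 / n" s t] n
    unfolding n_def by simp
  moreover have "s \<le> s / n" "t \<le> t / n" using n assms mult_left_le_one_le[of s n] mult_left_le_one_le[of t n]
    by (simp_all add: field_simps)
  ultimately show ?thesis using that by blast
qed

lemma norm_R2_face_cone:
  assumes N: "is_norm_R2 N"
    and pq: "N (p1, p2) = 1" "N (q1, q2) = 1" "N (p1 + q1, p2 + q2) = 2"
    and st: "0 \<le> s" "0 \<le> t"
  shows "N (s * p1 + t * q1, s * p2 + t * q2) = s + t"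
proof (rule antisym)
  show "N (s * p1 + t * q1, s * p2 + t * q2) \<le> s + t"
    using norm_R2_triangle[OF N, of "s * p1" "t * q1" "s * p2" "t * q2"]
      norm_R2_homogeneous[OF N] pq st by simp
next
  have "N (s * (p1 + q1), s * (p2 + q2))
      \<le> N (s * p1 + t * q1, s * p2 + t * q2) + N ((s - t) * q1, (s - t) * q2)"
    using norm_R2_triangle[OF N, of "s * p1 + t * q1" "(s - t) * q1" "s * p2 + t * q2" "(s - t) * q2"]
    by (simp add: algebra_simps)
  moreover have "N (t * (p1 + q1), t * (p2 + q2))
      \<le> N (s * p1 + t * q1, s * p2 + t * q2) + N ((t - s) * p1, (t - s) * p2)"
    using norm_R2_triangle[OF N, of "s * p1 + t * q1" "(t - s) * p1" "s * p2 + t * q2" "(t - s) * p2"]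
    by (simp add: algebra_simps)
  ultimately show "s + t \<le> N (s * p1 + t * q1, s * p2 + t * q2)"
    using norm_R2_homogeneous[OF N] pq st by (cases "t \<le> s") auto
qed

text \<open>Below the ray through (a, b), the point (\<alpha>, \<beta>) lies in the cone spanned by (1, 0) and (a, b).\<close>
lemma octahedral_point_add_unit_below:
  assumes A: "absolute_norm N" and nn: "normalized_norm N"
    and ab: "0 \<le> a" "0 \<le> b" "N (a, b) = 1" "N (a + 1, b) = 2"
    and \<alpha>\<beta>: "0 \<le> \<alpha>" "0 \<le> \<beta>" "N (\<alpha>, \<beta>) = 1" and below: "\<beta> * a \<le> \<alpha> * b"
  shows "N (a + \<alpha>, b + \<beta>) = 2"
proof -
  have N: "is_norm_R2 N" using A by (rule absolute_norm_is_norm_R2)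
  define \<nu> where "\<nu> = \<beta> / b"
  define \<mu> where "\<mu> = \<alpha> - \<nu> * a"
  have \<nu>b: "\<nu> * b = \<beta>"
  proof (cases "b = 0")
    case True
    then have "a = 1" using ab normalized_norm_axis1[OF N nn, of a] by simp
    then show ?thesis using below True \<alpha>\<beta> by (simp add: \<nu>_def)
  qed (simp add: \<nu>_def)
  have \<nu>: "0 \<le> \<nu>" using \<alpha>\<beta> ab by (simp add: \<nu>_def)
  have \<mu>: "0 \<le> \<mu>"
    using below \<alpha>\<beta> ab \<nu>b by (cases "b = 0") (auto simp: \<mu>_def \<nu>_def field_simps)
  have face: "N (1, 0) = 1" "N (a, b) = 1" "N (1 + a, 0 + b) = 2"
    using nn ab unfolding normalized_norm_def by (simp_all add: add.commute)
  have "\<mu> + \<nu> = N (\<mu> * 1 + \<nu> * a, \<mu> * 0 + \<nu> * b)"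
    using norm_R2_face_cone[OF N face \<mu> \<nu>] by simp
  also have "\<dots> = 1" using \<alpha>\<beta> \<nu>b by (simp add: \<mu>_def)
  finally have "\<mu> + \<nu> = 1" .
  moreover have "N (\<mu> * 1 + (1 + \<nu>) * a, \<mu> * 0 + (1 + \<nu>) * b) = \<mu> + (1 + \<nu>)"
    using norm_R2_face_cone[OF N face \<mu>] \<nu> by simp
  ultimately show ?thesis using \<nu>b by (simp add: \<mu>_def algebra_simps)
qed

lemma octahedral_point_add_unit:
  assumes A: "absolute_norm N" and nn: "normalized_norm N"
    and ab: "0 \<le> a" "0 \<le> b" "N (a, b) = 1" "N (a, b + 1) = 2" "N (a + 1, b) = 2"
    and \<alpha>\<beta>: "0 \<le> \<alpha>" "0 \<le> \<beta>" "N (\<alpha>, \<beta>) = 1"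
  shows "N (a + \<alpha>, b + \<beta>) = 2"
proof (cases "\<beta> * a \<le> \<alpha> * b")
  case True
  then show ?thesis using octahedral_point_add_unit_below[OF A nn ab(1-3,5) \<alpha>\<beta>] by blast
next
  case False
  then show ?thesis
    using octahedral_point_add_unit_below[OF absolute_norm_swap[OF A] normalized_norm_swap[OF nn],
        of b a \<beta> \<alpha>] ab \<alpha>\<beta>
    by simp
qed


lemma weakly_open_basic_nbhd:
  assumes fin: "finite G" and bf: "\<forall>g\<in>G. bounded_functional nrm g" and e: "0 < e"
  shows "weakly_open nrm {w. \<forall>g\<in>G. \<bar>g w - g c\<bar> < e}"
  unfolding weakly_open_def
proof
  fix w0 assume w0: "w0 \<in> {w. \<forall>g\<in>G. \<bar>g w - g c\<bar> < e}"
  define \<eta> where "\<eta> = Min (insert e ((\<lambda>g. e - \<bar>g w0 - g c\<bar>) ` G))"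
  have fin\<eta>: "finite (insert e ((\<lambda>g. e - \<bar>g w0 - g c\<bar>) ` G))" using fin by simp
  have "0 < \<eta>" unfolding \<eta>_def using fin\<eta> e w0 by (subst Min_gr_iff) auto
  moreover have "\<eta> \<le> e - \<bar>g w0 - g c\<bar>" if "g \<in> G" for g
    unfolding \<eta>_def using fin\<eta> that by (intro Min_le) auto
  then have "{v. \<forall>g\<in>G. \<bar>g v - g w0\<bar> < \<eta>} \<subseteq> {w. \<forall>g\<in>G. \<bar>g w - g c\<bar> < e}"
    by (force simp: abs_less_iff)
  ultimately show "\<exists>F \<epsilon>. finite F \<and> (\<forall>f\<in>F. bounded_functional nrm f) \<and> 0 < \<epsilon> \<and>
      {v. \<forall>f\<in>F. \<bar>f v - f w0\<bar> < \<epsilon>} \<subseteq> {w. \<forall>g\<in>G. \<bar>g w - g c\<bar> < e}"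
    using fin bf by blast
qed

lemma weakly_openE:
  assumes "weakly_open nrm U" "u \<in> U"
  obtains F \<epsilon> where "finite F" "\<forall>f\<in>F. bounded_functional nrm f" "0 < \<epsilon>"
    "{v. \<forall>f\<in>F. \<bar>f v - f u\<bar> < \<epsilon>} \<subseteq> U"
proof -
  have "\<exists>F \<epsilon>. finite F \<and> (\<forall>f\<in>F. bounded_functional nrm f) \<and> 0 < \<epsilon> \<and>
      {v. \<forall>f\<in>F. \<bar>f v - f u\<bar> < \<epsilon>} \<subseteq> U"
    using assms unfolding weakly_open_def by (rule bspec)
  then show ?thesis by (elim exE conjE) (rule that)
qed

lemma bounded_functional_comp_isometry:
  assumes "bounded_functional nrm f" "linear L" "\<And>w. nrm (L w) = nrm' w"
  shows "bounded_functional nrm' (f \<circ> L)"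
  using assms unfolding bounded_functional_def by (metis comp_apply linear_compose)

lemma oplus_weak_nbhd_split:
  fixes F :: "('a::real_normed_vector \<times> 'b::real_normed_vector \<Rightarrow> real) set"
  assumes N: "is_norm_R2 N" and nn: "normalized_norm N"
    and F: "finite F" "\<forall>f\<in>F. bounded_functional (oplus_norm N) f"
  obtains G1 :: "('a \<Rightarrow> real) set" and G2 :: "('b \<Rightarrow> real) set"
  where "finite G1" "\<forall>g\<in>G1. bounded_functional norm g"
    and "finite G2" "\<forall>g\<in>G2. bounded_functional norm g"
    and "\<And>z1 z2 u1 u2 e. \<forall>g\<in>G1. \<bar>g z1 - g u1\<bar> < e / 2 \<Longrightarrow> \<forall>g\<in>G2. \<bar>g z2 - g u2\<bar> < e / 2 \<Longrightarrow>
           \<forall>f\<in>F. \<bar>f (z1, z2) - f (u1, u2)\<bar> < e"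
proof
  let ?G1 = "(\<lambda>f. f \<circ> (\<lambda>w. (w, 0))) ` F" and ?G2 = "(\<lambda>f. f \<circ> (\<lambda>w. (0, w))) ` F"
  show "finite ?G1" "finite ?G2" using F by auto
  show "\<forall>g\<in>?G1. bounded_functional norm g"
    using F normalized_norm_axis1[OF N nn]
    by (auto intro!: bounded_functional_comp_isometry linearI simp: oplus_norm_def)
  show "\<forall>g\<in>?G2. bounded_functional norm g"
    using F normalized_norm_axis2[OF N nn]
    by (auto intro!: bounded_functional_comp_isometry linearI simp: oplus_norm_def)
  fix z1 z2 u1 u2 and e :: real
  assume "\<forall>g\<in>?G1. \<bar>g z1 - g u1\<bar> < e / 2" "\<forall>g\<in>?G2. \<bar>g z2 - g u2\<bar> < e / 2"
  then have close: "\<bar>f (z1, 0) - f (u1, 0)\<bar> < e / 2" "\<bar>f (0, z2) - f (0, u2)\<bar> < e / 2"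
    if "f \<in> F" for f
    using that by auto
  show "\<forall>f\<in>F. \<bar>f (z1, z2) - f (u1, u2)\<bar> < e"
  proof
    fix f assume f: "f \<in> F"
    then have "linear f" using F(2) unfolding bounded_functional_def by blast
    then have "f (z1, z2) = f (z1, 0) + f (0, z2)" "f (u1, u2) = f (u1, 0) + f (0, u2)"
      using linear_add[of f "(z1, 0)" "(0, z2)"] linear_add[of f "(u1, 0)" "(0, u2)"] by simp_all
    then show "\<bar>f (z1, z2) - f (u1, u2)\<bar> < e" using close[OF f] unfolding abs_less_iff by linarith
  qed
qed

lemma SUP_eq_of_upper_approx:
  fixes h :: "'a \<Rightarrow> real"
  assumes "S \<noteq> {}" "\<forall>z\<in>S. h z \<le> c" "\<And>d. 0 < d \<Longrightarrow> \<exists>z\<in>S. c - d < h z"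
  shows "(SUP z\<in>S. h z) = c"
proof (rule cSup_eq_non_empty)
  fix y assume "\<And>v. v \<in> h ` S \<Longrightarrow> v \<le> y"
  then show "c \<le> y" using assms(3)[of "c - y"] by force
qed (use assms in auto)


lemma norm_scaleR_diff_ge:
  fixes x w :: "'a::real_normed_vector"
  assumes x: "norm x = 1" and w: "norm w \<le> 1" and xw: "2 - d < norm (x - w)" and d: "0 < d"
    and st: "0 \<le> s" "s \<le> 1" "0 \<le> t" "t \<le> 1"
  shows "s + t - d \<le> norm (s *\<^sub>R x - t *\<^sub>R w)"
proof (cases "t \<le> s")
  case True
  have "s *\<^sub>R (x - w) = (s *\<^sub>R x - t *\<^sub>R w) - (s - t) *\<^sub>R w" by (simp add: algebra_simps)
  then have "norm (s *\<^sub>R (x - w)) \<le> norm (s *\<^sub>R x - t *\<^sub>R w) + norm ((s - t) *\<^sub>R w)"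
    by (metis norm_triangle_ineq4)
  then have "s * norm (x - w) \<le> norm (s *\<^sub>R x - t *\<^sub>R w) + (s - t) * norm w"
    using st True by simp
  moreover have "s * (2 - d) \<le> s * norm (x - w)" using xw st by (intro mult_left_mono) auto
  moreover have "(s - t) * norm w \<le> s - t" using w True by (simp add: mult_left_le)
  moreover have "s * d \<le> d" using st d by (simp add: mult_left_le_one_le)
  ultimately show ?thesis by (simp add: algebra_simps)
next
  case False
  have "t *\<^sub>R (x - w) = (s *\<^sub>R x - t *\<^sub>R w) + (t - s) *\<^sub>R x" by (simp add: algebra_simps)
  then have "norm (t *\<^sub>R (x - w)) \<le> norm (s *\<^sub>R x - t *\<^sub>R w) + norm ((t - s) *\<^sub>R x)"
    by (metis norm_triangle_ineq)
  then have "t * norm (x - w) \<le> norm (s *\<^sub>R x - t *\<^sub>R w) + (t - s)"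
    using x st False by simp
  moreover have "t * (2 - d) \<le> t * norm (x - w)" using xw st by (intro mult_left_mono) auto
  moreover have "t * d \<le> d" using st d by (simp add: mult_left_le_one_le)
  ultimately show ?thesis by (simp add: algebra_simps)
qed

lemma super_daugavet_point_approx:
  fixes x :: "'a::real_normed_vector"
  assumes sd: "super_daugavet_point norm x" and V: "weakly_open norm V" "z0 \<in> V" "norm z0 \<le> 1"
    and d: "0 < d"
  obtains z where "z \<in> V" "norm z \<le> 1" "2 - d < norm (x - z)"
proof -
  let ?S = "V \<inter> unit_ball norm"
  have ne: "?S \<noteq> {}" using V unfolding unit_ball_def by auto
  have "norm x = 1" using sd unfolding super_daugavet_point_def by blast
  then have "norm (x - z) \<le> 2" if "norm z \<le> 1" for z
    using norm_triangle_ineq4[of x z] that by simp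
  then have "bdd_above ((\<lambda>z. norm (x - z)) ` ?S)"
    by (intro bdd_aboveI2[of _ _ 2]) (auto simp: unit_ball_def)
  moreover have "2 - d < (SUP z\<in>?S. norm (x - z))"
    using sd V ne d unfolding super_daugavet_point_def by simp
  ultimately show ?thesis using that less_cSUP_iff[OF ne] unfolding unit_ball_def by blast
qed

text \<open>Apply the super Daugavet property to the weak neighbourhood of u / t and rescale by t.\<close>
lemma super_daugavet_point_scaled_approx:
  fixes x u :: "'a::real_normed_vector"
  assumes sd: "super_daugavet_point norm x" and G: "finite G" "\<forall>g\<in>G. bounded_functional norm g"
    and e: "0 < e" and u: "norm u \<le> t" "t \<le> 1" and a: "0 \<le> a" "a \<le> 1" and d: "0 < d"
  obtains z where "\<forall>g\<in>G. \<bar>g z - g u\<bar> < e" "norm z \<le> t" "a + t - d \<le> norm (a *\<^sub>R x - z)"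
proof (cases "t = 0")
  case True
  moreover have "norm x = 1" using sd unfolding super_daugavet_point_def by blast
  ultimately show ?thesis using that[of u] u e a d by simp
next
  case False
  then have t: "0 < t" using u norm_ge_zero[of u] by linarith
  define V where "V = {w. \<forall>g\<in>G. \<bar>g w - g (u /\<^sub>R t)\<bar> < e / t}"
  have "weakly_open norm V" unfolding V_def using G e t by (intro weakly_open_basic_nbhd) simp_all
  moreover have "u /\<^sub>R t \<in> V" "norm (u /\<^sub>R t) \<le> 1" unfolding V_def using e t u by (simp_all add: field_simps)
  ultimately obtain z where z: "z \<in> V" "norm z \<le> 1" "2 - d < norm (x - z)"
    using super_daugavet_point_approx[OF sd _ _ _ d] by blast
  have "\<bar>g (t *\<^sub>R z) - g u\<bar> < e" if g: "g \<in> G" for g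
  proof -
    have "linear g" using G(2) g unfolding bounded_functional_def by blast
    then have "g (t *\<^sub>R z) - g u = t * (g z - g (u /\<^sub>R t))"
      using linear_scale[of g t z] linear_scale[of g t "u /\<^sub>R t"] t by (simp add: algebra_simps)
    moreover have "\<bar>g z - g (u /\<^sub>R t)\<bar> < e / t" using z(1) g unfolding V_def by simp
    ultimately show ?thesis using t by (simp add: abs_mult pos_less_divide_eq mult.commute)
  qed
  moreover have "norm (t *\<^sub>R z) \<le> t" using z t by (simp add: mult_left_le)
  moreover have "a + t - d \<le> norm (a *\<^sub>R x - t *\<^sub>R z)"
    using sd z a u t d unfolding super_daugavet_point_def by (intro norm_scaleR_diff_ge) auto
  ultimately show ?thesis using that by blast
qed

lemma oplus_norm_diff_le:
  assumes A: "absolute_norm N"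
  shows "oplus_norm N (p - q) \<le> oplus_norm N p + oplus_norm N q"
proof -
  have "oplus_norm N (p - q) \<le> N (norm (fst p) + norm (fst q), norm (snd p) + norm (snd q))"
    unfolding oplus_norm_def by (auto intro!: absolute_norm_mono[OF A] norm_triangle_ineq4)
  also have "\<dots> \<le> oplus_norm N p + oplus_norm N q"
    unfolding oplus_norm_def by (rule norm_R2_triangle[OF absolute_norm_is_norm_R2[OF A]])
  finally show ?thesis .
qed

lemma oplus_super_daugavet_approx:
  fixes x :: "'a::real_normed_vector" and y :: "'b::real_normed_vector"
  assumes A: "absolute_norm N" and nn: "normalized_norm N"
    and ab: "0 \<le> a" "0 \<le> b" "N (a, b) = 1" "N (a, b + 1) = 2" "N (a + 1, b) = 2"
    and sdx: "super_daugavet_point norm x" and sdy: "super_daugavet_point norm y"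
    and U: "weakly_open (oplus_norm N) U" "(u, v) \<in> U" "oplus_norm N (u, v) \<le> 1" and d: "0 < d"
  shows "\<exists>z\<in>U \<inter> unit_ball (oplus_norm N). 2 - d < oplus_norm N ((a *\<^sub>R x, b *\<^sub>R y) - z)"
proof -
  have N: "is_norm_R2 N" using A by (rule absolute_norm_is_norm_R2)
  obtain F \<epsilon> where F: "finite F" "\<forall>f\<in>F. bounded_functional (oplus_norm N) f" "0 < \<epsilon>"
    "{w. \<forall>f\<in>F. \<bar>f w - f (u, v)\<bar> < \<epsilon>} \<subseteq> U"
    using weakly_openE[OF U(1,2)] by blast
  obtain G1 G2 where G: "finite G1" "\<forall>g\<in>G1. bounded_functional norm g"
    "finite G2" "\<forall>g\<in>G2. bounded_functional norm g"
    "\<And>z1 z2 u1 u2 e. \<forall>g\<in>G1. \<bar>g z1 - g u1\<bar> < e / 2 \<Longrightarrow> \<forall>g\<in>G2. \<bar>g z2 - g u2\<bar> < e / 2 \<Longrightarrow>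
        \<forall>f\<in>F. \<bar>f (z1, z2) - f (u1, u2)\<bar> < e"
    by (rule oplus_weak_nbhd_split[OF N nn F(1,2)], rule that)
  obtain \<alpha> \<beta> where \<alpha>\<beta>: "norm u \<le> \<alpha>" "norm v \<le> \<beta>" "N (\<alpha>, \<beta>) = 1"
    using absolute_norm_exists_unit_above[OF A nn, of "norm u" "norm v"] U(3)
    unfolding oplus_norm_def by auto
  have \<alpha>\<beta>_nonneg: "0 \<le> \<alpha>" "0 \<le> \<beta>" using \<alpha>\<beta> norm_ge_zero[of u] norm_ge_zero[of v] by linarith+
  have le1: "\<alpha> \<le> 1" "\<beta> \<le> 1" "a \<le> 1" "b \<le> 1"
    using absolute_norm_coord_le[OF A nn \<alpha>\<beta>_nonneg] absolute_norm_coord_le[OF A nn ab(1,2)] \<alpha>\<beta>(3) ab(3)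
    by simp_all
  have "0 < \<epsilon> / 2" "0 < d / 3" using F(3) d by simp_all
  obtain z1 where z1: "\<forall>g\<in>G1. \<bar>g z1 - g u\<bar> < \<epsilon> / 2" "norm z1 \<le> \<alpha>"
    "a + \<alpha> - d / 3 \<le> norm (a *\<^sub>R x - z1)"
    using super_daugavet_point_scaled_approx[OF sdx G(1,2) \<open>0 < \<epsilon> / 2\<close> \<alpha>\<beta>(1) le1(1)
        ab(1) le1(3) \<open>0 < d / 3\<close>] by blast
  obtain z2 where z2: "\<forall>g\<in>G2. \<bar>g z2 - g v\<bar> < \<epsilon> / 2" "norm z2 \<le> \<beta>"
    "b + \<beta> - d / 3 \<le> norm (b *\<^sub>R y - z2)"
    using super_daugavet_point_scaled_approx[OF sdy G(3,4) \<open>0 < \<epsilon> / 2\<close> \<alpha>\<beta>(2) le1(2)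
        ab(2) le1(4) \<open>0 < d / 3\<close>] by blast
  have "(z1, z2) \<in> U" using G(5)[OF z1(1) z2(1)] F(4) by blast
  moreover have "(z1, z2) \<in> unit_ball (oplus_norm N)"
    using absolute_norm_mono[OF A, of "norm z1" \<alpha> "norm z2" \<beta>] z1 z2 \<alpha>\<beta>
    unfolding unit_ball_def oplus_norm_def by simp
  moreover have "norm (a *\<^sub>R x - z1) \<le> a + \<alpha>" "norm (b *\<^sub>R y - z2) \<le> b + \<beta>"
    using norm_triangle_ineq4[of "a *\<^sub>R x" z1] norm_triangle_ineq4[of "b *\<^sub>R y" z2] z1 z2 ab sdx sdy
    unfolding super_daugavet_point_def by simp_all
  then have "2 - d < N (norm (a *\<^sub>R x - z1), norm (b *\<^sub>R y - z2))"
    using norm_R2_ge_diff_l1[OF N nn, of "a + \<alpha>" "b + \<beta>" "norm (a *\<^sub>R x - z1)" "norm (b *\<^sub>R y - z2)"]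
      octahedral_point_add_unit[OF A nn ab \<alpha>\<beta>_nonneg \<alpha>\<beta>(3)] z1(3) z2(3) d
    by simp
  ultimately show ?thesis unfolding oplus_norm_def by force
qed

theorem mainTheorem7:
  fixes x :: "'a::banach" and y :: "'b::banach"
    and N :: "real \<times> real \<Rightarrow> real" and a b :: real
  assumes "absolute_norm N" and "normalized_norm N" and "positively_octahedral N"
    and "0 \<le> a" and "0 \<le> b"
    and "N (a, b) = 1" and "N (a, b + 1) = 2" and "N (a + 1, b) = 2"
    and "super_daugavet_point norm x" and "super_daugavet_point norm y"
  shows "super_daugavet_point (oplus_norm N) (a *\<^sub>R x, b *\<^sub>R y)"
proof -
  note A = assms(1) and nn = assms(2) and ab = assms(4-8) and sd = assms(9,10)
  have unit: "oplus_norm N (a *\<^sub>R x, b *\<^sub>R y) = 1"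
    using sd ab unfolding super_daugavet_point_def oplus_norm_def by simp
  show ?thesis unfolding super_daugavet_point_def
  proof (intro conjI allI impI unit)
    fix U :: "('a \<times> 'b) set"
    assume U: "weakly_open (oplus_norm N) U \<and> U \<inter> unit_ball (oplus_norm N) \<noteq> {}"
    then obtain u v where uv: "(u, v) \<in> U" "oplus_norm N (u, v) \<le> 1"
      unfolding unit_ball_def by auto
    show "(SUP z\<in>U \<inter> unit_ball (oplus_norm N). oplus_norm N ((a *\<^sub>R x, b *\<^sub>R y) - z)) = 2"
    proof (rule SUP_eq_of_upper_approx)
      show "U \<inter> unit_ball (oplus_norm N) \<noteq> {}" using U by blast
      show "\<forall>z\<in>U \<inter> unit_ball (oplus_norm N). oplus_norm N ((a *\<^sub>R x, b *\<^sub>R y) - z) \<le> 2"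
        using oplus_norm_diff_le[OF A, of "(a *\<^sub>R x, b *\<^sub>R y)"] unit unfolding unit_ball_def
        by (smt (verit) Int_Collect)
      fix d :: real
      assume "0 < d"
      then show "\<exists>z\<in>U \<inter> unit_ball (oplus_norm N). 2 - d < oplus_norm N ((a *\<^sub>R x, b *\<^sub>R y) - z)"
        using U oplus_super_daugavet_approx[OF A nn ab sd _ uv] by blast
    qed
  qed
qed

end
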